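(* Let $\mathcal{G}=(V,\mathcal{E})$ be a strongly connected digraph with $n\ge3$ nodes, $P$ an irreducible Markov chain transition matrix conforming to $\mathcal{G}$, and $\tau\in\mathbb{Z}_{>0}$. Let $i\in V$ be a leaf node with unique neighbor $j\ne i$. Then for every $k\in V\setminus\{i,j\}$, $\mathbb{P}(T_{ki}\le\tau)\le\mathbb{P}(T_{ii}\le\tau)$; that is, attacking node $i$ just as the surveillance agent leaves node $i$ is not better for the intruder than attacking node $i$ while the agent is at $k$.
   Context: $P=(p_{ij})$ conforms to $\mathcal{G}$ if it is row-stochastic, nonnegative, and $p_{ij}=0$ whenever $(i,j)\notin\mathcal{E}$. A leaf node $i$ with neighbor $j$ is a node such that the only edges between $i$ and other nodes are $(i,j)$ and $(j,i)$ (a self-loop at $i$ may be present). For the Markov chain $(X_k)$ with transition matrix $P$, $T_{ij}=\min\{k\ge1:X_k=j\}$ given $X_0=i$; in particular $T_{ii}$ is the first return time to $i$. *)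

theory Defs
  imports "HOL-Analysis.Analysis"
begin

(* Node set V = {0..<n}; digraph edges E :: (nat \<times> nat) set;
   transition matrix P :: nat \<Rightarrow> nat \<Rightarrow> real (entries outside V irrelevant). *)

definition digraph_on :: "nat \<Rightarrow> (nat \<times> nat) set \<Rightarrow> bool" where
  "digraph_on n E \<longleftrightarrow> E \<subseteq> {..<n} \<times> {..<n}"

definition strongly_connected :: "nat \<Rightarrow> (nat \<times> nat) set \<Rightarrow> bool" where
  "strongly_connected n E \<longleftrightarrow> (\<forall>u<n. \<forall>v<n. (u, v) \<in> E\<^sup>*)"

definition conforms :: "nat \<Rightarrow> (nat \<times> nat) set \<Rightarrow> (nat \<Rightarrow> nat \<Rightarrow> real) \<Rightarrow> bool" where
  "conforms n E P \<longleftrightarrow>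
     (\<forall>a<n. \<forall>b<n. P a b \<ge> 0) \<and>
     (\<forall>a<n. (\<Sum>b<n. P a b) = 1) \<and>
     (\<forall>a<n. \<forall>b<n. (a, b) \<notin> E \<longrightarrow> P a b = 0)"

fun mpow :: "nat \<Rightarrow> (nat \<Rightarrow> nat \<Rightarrow> real) \<Rightarrow> nat \<Rightarrow> nat \<Rightarrow> nat \<Rightarrow> real" where
  "mpow n P 0 a b = (if a = b then 1 else 0)"
| "mpow n P (Suc m) a b = (\<Sum>c<n. mpow n P m a c * P c b)"

definition irreducible_chain :: "nat \<Rightarrow> (nat \<Rightarrow> nat \<Rightarrow> real) \<Rightarrow> bool" where
  "irreducible_chain n P \<longleftrightarrow> (\<forall>a<n. \<forall>b<n. \<exists>m. mpow n P m a b > 0)"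

(* leaf node i with neighbor j: the only edges between i and other nodes
   are (i,j) and (j,i); a self-loop at i may be present *)
definition leaf_node :: "nat \<Rightarrow> (nat \<times> nat) set \<Rightarrow> nat \<Rightarrow> nat \<Rightarrow> bool" where
  "leaf_node n E i j \<longleftrightarrow> i < n \<and> j < n \<and> j \<noteq> i \<and>
     (i, j) \<in> E \<and> (j, i) \<in> E \<and>
     (\<forall>m<n. m \<noteq> i \<longrightarrow> (((i, m) \<in> E \<or> (m, i) \<in> E) \<longrightarrow> m = j))"

definition path_prob :: "(nat \<Rightarrow> nat \<Rightarrow> real) \<Rightarrow> nat list \<Rightarrow> real" where
  "path_prob P w = (\<Prod>m < length w - 1. P (w ! m) (w ! Suc m))"

(* P(T_ki = t): sum over trajectories k = X_0, X_1, ..., X_{t-1} \<noteq> i, X_t = i *)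
definition first_hit_prob :: "nat \<Rightarrow> (nat \<Rightarrow> nat \<Rightarrow> real) \<Rightarrow> nat \<Rightarrow> nat \<Rightarrow> nat \<Rightarrow> real" where
  "first_hit_prob n P k i t =
     (if t = 0 then 0 else
       (\<Sum>xs \<in> {xs. set xs \<subseteq> {..<n} - {i} \<and> length xs = t - 1}.
           path_prob P (k # xs @ [i])))"

(* P(T_ki \<le> \<tau>), T_ki = min{t \<ge> 1. X_t = i} given X_0 = k *)
definition hit_within_prob :: "nat \<Rightarrow> (nat \<Rightarrow> nat \<Rightarrow> real) \<Rightarrow> nat \<Rightarrow> nat \<Rightarrow> nat \<Rightarrow> real" where
  "hit_within_prob n P k i \<tau> = (\<Sum>t\<in>{1..\<tau>}. first_hit_prob n P k i t)"

end

theory Submission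
  imports Defs
begin

text \<open>Write \<open>H t a\<close> for \<open>P(T\<^sub>a\<^sub>i \<le> t)\<close>. A first-step analysis gives
  \<open>H (t+1) a = P a i + (\<Sum>c\<noteq>i. P a c * H t c)\<close>, and \<open>H t a\<close> is a probability nondecreasing in \<open>t\<close>.
  If \<open>i\<close> is a leaf with neighbour \<open>j\<close>, a walk from \<open>k \<notin> {i, j}\<close> must pass through \<open>j\<close> before
  it reaches \<open>i\<close>, which costs at least one step, so \<open>H (t+1) k \<le> H t j\<close>; a walk from \<open>i\<close> either
  returns at once or moves to \<open>j\<close>, so \<open>H (t+1) i = P i i + P i j * H t j \<ge> H t j\<close>.\<close>

definition stochastic_matrix :: "nat \<Rightarrow> (nat \<Rightarrow> nat \<Rightarrow> real) \<Rightarrow> bool" where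
  "stochastic_matrix n P \<longleftrightarrow> (\<forall>a<n. \<forall>b<n. 0 \<le> P a b) \<and> (\<forall>a<n. (\<Sum>b<n. P a b) = 1)"

lemma conforms_imp_stochastic_matrix: "conforms n E P \<Longrightarrow> stochastic_matrix n P"
  unfolding conforms_def stochastic_matrix_def by blast

lemma stochastic_matrix_nonneg: "stochastic_matrix n P \<Longrightarrow> a < n \<Longrightarrow> b < n \<Longrightarrow> 0 \<le> P a b"
  unfolding stochastic_matrix_def by blast

lemma stochastic_matrix_row_sum_remove:
  assumes "stochastic_matrix n P" "a < n" "i < n"
  shows "(\<Sum>c\<in>{..<n}-{i}. P a c) = 1 - P a i"
  using assms sum.remove[of "{..<n}" i "P a"] unfolding stochastic_matrix_def by simp

lemma stochastic_matrix_weighted_sum_le: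
  assumes P: "stochastic_matrix n P" and "a < n" "i < n"
    and bound: "\<And>c. c < n \<Longrightarrow> c \<noteq> i \<Longrightarrow> f c \<le> M" and "0 \<le> M"
  shows "(\<Sum>c\<in>{..<n}-{i}. P a c * f c) \<le> (1 - P a i) * M"
proof -
  have "(\<Sum>c\<in>{..<n}-{i}. P a c * f c) \<le> (\<Sum>c\<in>{..<n}-{i}. P a c * M)"
    using assms by (intro sum_mono mult_left_mono) (auto intro: stochastic_matrix_nonneg)
  also have "\<dots> = (1 - P a i) * M"
    using stochastic_matrix_row_sum_remove[OF assms(1-3)] by (simp add: sum_distrib_right[symmetric])
  finally show ?thesis .
qed

lemma path_prob_Cons_Cons: "path_prob P (a # b # w) = P a b * path_prob P (b # w)"
proof -
  have "length (a # b # w) - 1 = Suc (length (b # w) - 1)" by simp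
  then show ?thesis unfolding path_prob_def
    by (simp only: prod.lessThan_Suc_shift) simp
qed

lemma path_prob_nonneg:
  assumes "stochastic_matrix n P" "set w \<subseteq> {..<n}"
  shows "0 \<le> path_prob P w"
proof -
  have "w ! m < n" if "m < length w" for m
    using assms(2) nth_mem[OF that] by blast
  then show ?thesis
    unfolding path_prob_def by (intro prod_nonneg stochastic_matrix_nonneg[OF assms(1)]) auto
qed

lemma lists_length_Suc_eq:
  "{xs. set xs \<subseteq> S \<and> length xs = Suc t} =
     (\<lambda>(c, ys). c # ys) ` (S \<times> {ys. set ys \<subseteq> S \<and> length ys = t})"
  by (auto simp: length_Suc_conv)

lemma first_hit_prob_1: "first_hit_prob n P a i 1 = P a i"
proof -
  have "{xs. set xs \<subseteq> {..<n} - {i} \<and> length xs = 0} = {[]}" by auto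
  then show ?thesis unfolding first_hit_prob_def path_prob_def by simp
qed

lemma first_hit_prob_Suc_Suc:
  "first_hit_prob n P a i (Suc (Suc t)) = (\<Sum>c\<in>{..<n}-{i}. P a c * first_hit_prob n P c i (Suc t))"
proof -
  let ?S = "{..<n}-{i}"
  let ?L = "\<lambda>t. {xs. set xs \<subseteq> ?S \<and> length xs = t}"
  have "first_hit_prob n P a i (Suc (Suc t)) = (\<Sum>xs\<in>?L (Suc t). path_prob P (a # xs @ [i]))"
    unfolding first_hit_prob_def by simp
  also have "\<dots> = (\<Sum>(c, ys)\<in>?S \<times> ?L t. path_prob P (a # c # ys @ [i]))"
    unfolding lists_length_Suc_eq by (subst sum.reindex) (auto simp: inj_on_def intro!: sum.cong)
  also have "\<dots> = (\<Sum>c\<in>?S. \<Sum>ys\<in>?L t. P a c * path_prob P (c # ys @ [i]))"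
    by (subst sum.cartesian_product[symmetric]) (simp add: path_prob_Cons_Cons)
  also have "\<dots> = (\<Sum>c\<in>?S. P a c * first_hit_prob n P c i (Suc t))"
    unfolding first_hit_prob_def by (simp add: sum_distrib_left)
  finally show ?thesis .
qed

lemma first_hit_prob_nonneg:
  assumes "stochastic_matrix n P" "a < n" "i < n"
  shows "0 \<le> first_hit_prob n P a i t"
  unfolding first_hit_prob_def using assms
  by (auto intro!: sum_nonneg path_prob_nonneg)

lemma hit_within_prob_0 [simp]: "hit_within_prob n P a i 0 = 0"
  unfolding hit_within_prob_def by simp

lemma hit_within_prob_Suc_eq_add_first_hit:
  "hit_within_prob n P a i (Suc t) = hit_within_prob n P a i t + first_hit_prob n P a i (Suc t)"
  unfolding hit_within_prob_def by simp

lemma hit_within_prob_Suc: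
  "hit_within_prob n P a i (Suc t) = P a i + (\<Sum>c\<in>{..<n}-{i}. P a c * hit_within_prob n P c i t)"
proof -
  have "hit_within_prob n P a i (Suc t) = first_hit_prob n P a i 1 + (\<Sum>s\<in>{1..t}. first_hit_prob n P a i (Suc s))"
    unfolding hit_within_prob_def
    by (simp only: sum.atLeast_Suc_atMost[of 1 "Suc t"] sum.atLeast_Suc_atMost_Suc_shift)
      (simp add: comp_def)
  also have "(\<Sum>s\<in>{1..t}. first_hit_prob n P a i (Suc s)) =
      (\<Sum>s\<in>{1..t}. \<Sum>c\<in>{..<n}-{i}. P a c * first_hit_prob n P c i s)"
    by (intro sum.cong refl) (auto simp: first_hit_prob_Suc_Suc dest!: Suc_le_D)
  also have "\<dots> = (\<Sum>c\<in>{..<n}-{i}. P a c * hit_within_prob n P c i t)"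
    unfolding hit_within_prob_def by (simp add: sum_distrib_left) (rule sum.swap)
  finally show ?thesis by (simp only: first_hit_prob_1)
qed

lemma hit_within_prob_mono_Suc:
  assumes "stochastic_matrix n P" "a < n" "i < n"
  shows "hit_within_prob n P a i t \<le> hit_within_prob n P a i (Suc t)"
  using first_hit_prob_nonneg[OF assms] by (simp add: hit_within_prob_Suc_eq_add_first_hit)

lemma hit_within_prob_nonneg:
  assumes "stochastic_matrix n P" "a < n" "i < n"
  shows "0 \<le> hit_within_prob n P a i t"
  unfolding hit_within_prob_def using first_hit_prob_nonneg[OF assms] by (simp add: sum_nonneg)

lemma hit_within_prob_le_1:
  assumes P: "stochastic_matrix n P" and "a < n" "i < n"
  shows "hit_within_prob n P a i t \<le> 1"
  using \<open>a < n\<close>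
proof (induction t arbitrary: a)
  case (Suc t)
  have "(\<Sum>c\<in>{..<n}-{i}. P a c * hit_within_prob n P c i t) \<le> (1 - P a i) * 1"
    using Suc by (intro stochastic_matrix_weighted_sum_le[OF P _ \<open>i < n\<close>]) auto
  then show ?case by (simp add: hit_within_prob_Suc)
qed simp

lemma hit_within_prob_Suc_le_gateway:
  assumes P: "stochastic_matrix n P" and "i < n" "j < n"
    and gateway: "\<And>c. c < n \<Longrightarrow> c \<noteq> i \<Longrightarrow> c \<noteq> j \<Longrightarrow> P c i = 0"
  shows "k < n \<Longrightarrow> k \<noteq> i \<Longrightarrow> k \<noteq> j \<Longrightarrow> hit_within_prob n P k i (Suc t) \<le> hit_within_prob n P j i t"
proof (induction t arbitrary: k)
  case 0
  then show ?case by (simp add: hit_within_prob_Suc gateway)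
next
  case (Suc t)
  let ?H = "\<lambda>t c. hit_within_prob n P c i t"
  have "?H (Suc t) c \<le> ?H (Suc t) j" if "c < n" "c \<noteq> i" for c
  proof (cases "c = j")
    case False
    then have "?H (Suc t) c \<le> ?H t j" using Suc.IH that by blast
    also have "\<dots> \<le> ?H (Suc t) j" by (rule hit_within_prob_mono_Suc[OF P \<open>j < n\<close> \<open>i < n\<close>])
    finally show ?thesis .
  qed simp
  then have "(\<Sum>c\<in>{..<n}-{i}. P k c * ?H (Suc t) c) \<le> (1 - P k i) * ?H (Suc t) j"
    using Suc.prems assms by (intro stochastic_matrix_weighted_sum_le hit_within_prob_nonneg) auto
  then show ?case using Suc.prems by (simp add: hit_within_prob_Suc[of _ _ k] gateway)
qed

lemma hit_within_prob_le_return: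
  assumes P: "stochastic_matrix n P" and "i < n" "j < n" "j \<noteq> i"
    and exits: "\<And>c. c < n \<Longrightarrow> c \<noteq> i \<Longrightarrow> c \<noteq> j \<Longrightarrow> P i c = 0"
  shows "hit_within_prob n P j i t \<le> hit_within_prob n P i i (Suc t)"
proof -
  let ?H = "\<lambda>c. hit_within_prob n P c i t"
  have exit_sum: "(\<Sum>c\<in>{..<n}-{i}. P i c * f c) = P i j * f j" for f :: "nat \<Rightarrow> real"
    using assms by (subst sum.remove[of _ j]) (auto intro!: sum.neutral)
  have "?H j = (P i i + P i j) * ?H j"
    using stochastic_matrix_row_sum_remove[OF P \<open>i < n\<close> \<open>i < n\<close>] exit_sum[of "\<lambda>_. 1"] by simp
  also have "\<dots> \<le> P i i + P i j * ?H j"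
    using assms hit_within_prob_le_1 stochastic_matrix_nonneg
    by (simp add: distrib_right mult_left_le)
  also have "\<dots> = hit_within_prob n P i i (Suc t)"
    by (simp add: hit_within_prob_Suc exit_sum)
  finally show ?thesis .
qed

lemma conforms_leaf_node_transition_eq_0:
  assumes "conforms n E P" "leaf_node n E i j" "c < n" "c \<noteq> i" "c \<noteq> j"
  shows "P c i = 0" and "P i c = 0"
  using assms unfolding conforms_def leaf_node_def by blast+

theorem lemma4:
  fixes n :: nat and E :: "(nat \<times> nat) set" and P :: "nat \<Rightarrow> nat \<Rightarrow> real"
    and \<tau> i j :: nat
  assumes "n \<ge> 3"
    and "digraph_on n E"
    and "strongly_connected n E"
    and "conforms n E P"
    and "irreducible_chain n P"
    and "\<tau> > 0"
    and "leaf_node n E i j"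
  shows "\<forall>k<n. k \<noteq> i \<and> k \<noteq> j \<longrightarrow> hit_within_prob n P k i \<tau> \<le> hit_within_prob n P i i \<tau>"
proof (intro allI impI)
  fix k assume k: "k < n" "k \<noteq> i \<and> k \<noteq> j"
  obtain t where \<tau>: "\<tau> = Suc t" using \<open>\<tau> > 0\<close> gr0_implies_Suc by blast
  have P: "stochastic_matrix n P" using \<open>conforms n E P\<close> by (rule conforms_imp_stochastic_matrix)
  have ij: "i < n" "j < n" "j \<noteq> i" using \<open>leaf_node n E i j\<close> unfolding leaf_node_def by auto
  note leaf = conforms_leaf_node_transition_eq_0[OF \<open>conforms n E P\<close> \<open>leaf_node n E i j\<close>]
  have "hit_within_prob n P k i (Suc t) \<le> hit_within_prob n P j i t"
    using k by (intro hit_within_prob_Suc_le_gateway[OF P ij(1,2)] leaf(1)) auto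
  also have "\<dots> \<le> hit_within_prob n P i i (Suc t)"
    by (intro hit_within_prob_le_return[OF P ij] leaf(2))
  finally show "hit_within_prob n P k i \<tau> \<le> hit_within_prob n P i i \<tau>" by (simp add: \<tau>)
qed

end
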